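(* Let $(\theta^-,\theta^+)$ be the maximal open interval containing $0$ on which the function $\gamma$ exists. Then $\tilde\theta(\theta)=\theta$ is the only continuously differentiable function $\tilde\theta:(\theta^-,\theta^+)\to(\theta^-,\theta^+)$ with $\tilde\theta(0)=0$ and $f_{\mathbf{u}_0}(\tilde\theta(\theta),\theta)=0$ for all $\theta\in(\theta^-,\theta^+)$, where $f_{\mathbf{u}_0}(\tilde\theta,\theta):=\mathbf{t}_2^d(\gamma(\tilde\theta))\cdot\mathbf{t}_4^r-\mathbf{t}_2^d(\gamma(\theta))\cdot\mathbf{t}_4^r$. The same holds with $f_{\mathbf{u}_0}$ replaced by $f_{\mathbf{v}_0}(\tilde\theta,\theta):=\mathbf{t}_3^d(\tilde\theta)\cdot\mathbf{t}_1^r-\mathbf{t}_3^d(\theta)\cdot\mathbf{t}_1^r$.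
   Context: Fix $\mathbf{t}_1^r,\dots,\mathbf{t}_4^r\in\mathbb{R}^3$ with $\mathbf{t}_i^r\cdot(\mathbf{t}_j^r\times\mathbf{t}_k^r)\neq0$ for $ijk\in\{123,234,341,412\}$. For nonzero $\mathbf{t}$ let $\mathbf{R}_{\mathbf{t}}(\varphi):=|\mathbf{t}|^{-2}\mathbf{t}\otimes\mathbf{t}+\cos\varphi(\mathbf{I}-|\mathbf{t}|^{-2}\mathbf{t}\otimes\mathbf{t})+|\mathbf{t}|^{-1}\sin\varphi(\mathbf{t}\times)$. Set $\mathbf{t}_2^d(\gamma):=\mathbf{R}_{\mathbf{t}_1^r}(\gamma)\mathbf{t}_2^r$, $\mathbf{t}_3^d(\theta):=\mathbf{R}_{\mathbf{t}_4^r}(\theta)\mathbf{t}_3^r$. The function $\gamma$ is the unique $C^1$ function with $\gamma(0)=0$, $\mathbf{t}_2^d(\gamma(\theta))\cdot\mathbf{t}_3^d(\theta)=\mathbf{t}_2^r\cdot\mathbf{t}_3^r$, and such that the four quantities $[\mathbf{t}_1^r\cdot(\mathbf{t}_2^d(\gamma(\theta))\times\mathbf{t}_3^d(\theta))][\mathbf{t}_1^r\cdot(\mathbf{t}_2^r\times\mathbf{t}_3^r)]$, $[\mathbf{t}_2^d(\gamma(\theta))\cdot(\mathbf{t}_3^d(\theta)\times\mathbf{t}_4^r)][\mathbf{t}_2^r\cdot(\mathbf{t}_3^r\times\mathbf{t}_4^r)]$, $[\mathbf{t}_3^d(\theta)\cdot(\mathbf{t}_4^r\times\mathbf{t}_1^r)][\mathbf{t}_3^r\cdot(\mathbf{t}_4^r\times\mathbf{t}_1^r)]$,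 $[\mathbf{t}_4^r\cdot(\mathbf{t}_1^r\times\mathbf{t}_2^d(\gamma(\theta)))][\mathbf{t}_4^r\cdot(\mathbf{t}_1^r\times\mathbf{t}_2^r)]$ are positive; it is analytic with $\gamma'(\theta)=\frac{|\mathbf{t}_1^r|}{|\mathbf{t}_4^r|}\frac{\mathbf{t}_2^d(\gamma(\theta))\cdot(\mathbf{t}_3^d(\theta)\times\mathbf{t}_4^r)}{\mathbf{t}_1^r\cdot(\mathbf{t}_2^d(\gamma(\theta))\times\mathbf{t}_3^d(\theta))}$. *)

theory Defs
  imports "HOL-Analysis.Analysis"
begin

definition trip :: "real^3 \<Rightarrow> real^3 \<Rightarrow> real^3 \<Rightarrow> real" where
  "trip a b c = a \<bullet> cross3 b c"

definition Rot :: "real^3 \<Rightarrow> real \<Rightarrow> real^3 \<Rightarrow> real^3" where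
  "Rot t phi v =
     ((t \<bullet> v) / (norm t)^2) *\<^sub>R t
     + cos phi *\<^sub>R (v - ((t \<bullet> v) / (norm t)^2) *\<^sub>R t)
     + (sin phi / norm t) *\<^sub>R cross3 t v"

definition t2d :: "real^3 \<Rightarrow> real^3 \<Rightarrow> real \<Rightarrow> real^3" where
  "t2d t1 t2 g = Rot t1 g t2"

definition t3d :: "real^3 \<Rightarrow> real^3 \<Rightarrow> real \<Rightarrow> real^3" where
  "t3d t4 t3 th = Rot t4 th t3"

definition gamma_sol ::
  "real^3 \<Rightarrow> real^3 \<Rightarrow> real^3 \<Rightarrow> real^3 \<Rightarrow> real set \<Rightarrow> (real \<Rightarrow> real) \<Rightarrow> bool" where
  "gamma_sol t1 t2 t3 t4 J g \<longleftrightarrow>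
     g C1_differentiable_on J \<and> g 0 = 0 \<and>
     (\<forall>th\<in>J.
        t2d t1 t2 (g th) \<bullet> t3d t4 t3 th = t2 \<bullet> t3 \<and>
        trip t1 (t2d t1 t2 (g th)) (t3d t4 t3 th) * trip t1 t2 t3 > 0 \<and>
        trip (t2d t1 t2 (g th)) (t3d t4 t3 th) t4 * trip t2 t3 t4 > 0 \<and>
        trip (t3d t4 t3 th) t4 t1 * trip t3 t4 t1 > 0 \<and>
        trip t4 t1 (t2d t1 t2 (g th)) * trip t4 t1 t2 > 0)"

definition open_int0 :: "real set \<Rightarrow> bool" where
  "open_int0 J \<longleftrightarrow> open J \<and> is_interval J \<and> 0 \<in> J"

definition f_u0 :: "real^3 \<Rightarrow> real^3 \<Rightarrow> real^3 \<Rightarrow> (real \<Rightarrow> real) \<Rightarrow> real \<Rightarrow> real \<Rightarrow> real" where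
  "f_u0 t1 t2 t4 g tt th = t2d t1 t2 (g tt) \<bullet> t4 - t2d t1 t2 (g th) \<bullet> t4"

definition f_v0 :: "real^3 \<Rightarrow> real^3 \<Rightarrow> real^3 \<Rightarrow> real \<Rightarrow> real \<Rightarrow> real" where
  "f_v0 t1 t3 t4 tt th = t3d t4 t3 tt \<bullet> t1 - t3d t4 t3 th \<bullet> t1"

end

theory Submission imports Defs begin

text \<open>Both \<open>\<theta> \<mapsto> t\<^sub>2\<^sup>d(\<gamma> \<theta>) \<bullet> t\<^sub>4\<close> and \<open>\<theta> \<mapsto> t\<^sub>3\<^sup>d(\<theta>) \<bullet> t\<^sub>1\<close> are injective on \<open>I\<close>:
  a rotation about \<open>t\<close> has derivative \<open>|t|\<^sup>-\<^sup>1 t \<times> _\<close>, so their derivatives are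
  (up to the factor \<open>\<gamma>'\<close>) triple products that the sign conditions keep away from zero, and
  \<open>\<gamma>' \<noteq> 0\<close> because differentiating the constraint at a zero of \<open>\<gamma>'\<close> would make another
  of these triple products vanish. Hence \<open>f(\<theta>t \<theta>, \<theta>) = 0\<close> forces \<open>\<theta>t \<theta> = \<theta>\<close>.\<close>

lemma Rot_has_vector_derivative:
  assumes "t \<noteq> 0"
  shows "((\<lambda>s. Rot t s v) has_vector_derivative (1 / norm t) *\<^sub>R cross3 t (Rot t s v)) (at s)"
proof -
  have "(1 / norm t) *\<^sub>R cross3 t (Rot t s v) =
      - sin s *\<^sub>R (v - ((t \<bullet> v) / (norm t)^2) *\<^sub>R t) + (cos s / norm t) *\<^sub>R cross3 t v"
    using assms
    by (simp add: Rot_def cross_add_right cross_mult_right Cross3.right_diff_distrib Lagrange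
        power2_norm_eq_inner[symmetric] algebra_simps power2_eq_square)
  with assms show ?thesis
    unfolding Rot_def by (auto intro!: derivative_eq_intros)
qed

lemma Rot_inner_has_real_derivative:
  assumes "t \<noteq> 0"
  shows "((\<lambda>s. Rot t s v \<bullet> w) has_real_derivative trip w t (Rot t s v) / norm t) (at s)"
  using bounded_linear.has_vector_derivative[OF bounded_linear_inner_left
      Rot_has_vector_derivative[OF assms, of v s], of w]
  by (simp add: has_real_derivative_iff_has_vector_derivative trip_def inner_commute)

lemma inj_on_if_deriv_nonzero:
  fixes f :: "real \<Rightarrow> real"
  assumes I: "is_interval I"
    and f': "\<And>x. x \<in> I \<Longrightarrow> (f has_real_derivative f' x) (at x)"
    and nz: "\<And>x. x \<in> I \<Longrightarrow> f' x \<noteq> 0"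
  shows "inj_on f I"
proof -
  have False if ab: "a \<in> I" "b \<in> I" "a < b" "f a = f b" for a b
  proof -
    have sub: "{a..b} \<subseteq> I"
      using mem_is_interval_1_I[OF I ab(1,2)] by auto
    have "continuous_on {a..b} f"
      using sub f' by (meson DERIV_isCont continuous_at_imp_continuous_on subsetD)
    moreover have "f differentiable (at x)" if "a < x" "x < b" for x
      using sub f' that by (meson atLeastAtMost_iff less_imp_le real_differentiable_def subsetD)
    ultimately obtain z where "a < z" "z < b" "(f has_real_derivative 0) (at z)"
      using Rolle[OF ab(3,4)] by blast
    moreover have "z \<in> I" using sub \<open>a < z\<close> \<open>z < b\<close> by auto
    ultimately show False
      using f' nz DERIV_unique by metis
  qed
  then show ?thesis
    by (metis inj_onI linorder_neqE_linordered_idom)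
qed

lemma level_eq_solution_iff_id:
  fixes h :: "real \<Rightarrow> real"
  assumes "open I" "0 \<in> I" "inj_on h I"
  shows "(\<theta>t C1_differentiable_on I \<and> \<theta>t ` I \<subseteq> I \<and> \<theta>t 0 = 0 \<and>
           (\<forall>\<theta>\<in>I. h (\<theta>t \<theta>) - h \<theta> = 0))
         \<longleftrightarrow> (\<forall>\<theta>\<in>I. \<theta>t \<theta> = \<theta>)"
proof
  assume "\<theta>t C1_differentiable_on I \<and> \<theta>t ` I \<subseteq> I \<and> \<theta>t 0 = 0 \<and> (\<forall>\<theta>\<in>I. h (\<theta>t \<theta>) - h \<theta> = 0)"
  then show "\<forall>\<theta>\<in>I. \<theta>t \<theta> = \<theta>"
    using assms(3) by (auto dest: inj_onD)
next
  assume id: "\<forall>\<theta>\<in>I. \<theta>t \<theta> = \<theta>"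
  have "(\<theta>t has_vector_derivative 1) (at x)" if "x \<in> I" for x
    using has_vector_derivative_transform_within_open[OF has_vector_derivative_id assms(1) that] id
    by auto
  then have "\<theta>t C1_differentiable_on I"
    unfolding C1_differentiable_on_def by (auto intro!: exI[of _ "\<lambda>_. 1"])
  then show "\<theta>t C1_differentiable_on I \<and> \<theta>t ` I \<subseteq> I \<and> \<theta>t 0 = 0 \<and> (\<forall>\<theta>\<in>I. h (\<theta>t \<theta>) - h \<theta> = 0)"
    using id assms(2) by auto
qed

lemma gamma_sol_deriv_nonzero:
  assumes "t1 \<noteq> 0" "t4 \<noteq> 0" "open I" "gamma_sol t1 t2 t3 t4 I \<gamma>" "x \<in> I"
    and \<gamma>': "(\<gamma> has_real_derivative \<gamma>') (at x)"
  shows "\<gamma>' \<noteq> 0"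
proof
  assume "\<gamma>' = 0"
  have "((\<lambda>\<theta>. t2d t1 t2 (\<gamma> \<theta>)) has_vector_derivative 0) (at x)"
    using vector_diff_chain_at[OF \<gamma>'[unfolded has_real_derivative_iff_has_vector_derivative]
        Rot_has_vector_derivative[OF assms(1)]] \<open>\<gamma>' = 0\<close>
    by (simp add: t2d_def o_def)
  from bounded_bilinear.has_vector_derivative[OF bounded_bilinear_inner this
      Rot_has_vector_derivative[OF assms(2), of t3 x]]
  have "((\<lambda>\<theta>. t2d t1 t2 (\<gamma> \<theta>) \<bullet> t3d t4 t3 \<theta>) has_real_derivative
      trip (t2d t1 t2 (\<gamma> x)) t4 (t3d t4 t3 x) / norm t4) (at x)"
    by (simp add: has_real_derivative_iff_has_vector_derivative trip_def t3d_def)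
  moreover have "((\<lambda>\<theta>. t2d t1 t2 (\<gamma> \<theta>) \<bullet> t3d t4 t3 \<theta>) has_real_derivative 0) (at x)"
    using assms(4) unfolding gamma_sol_def
    by (intro has_field_derivative_transform_within_open[OF DERIV_const assms(3,5)]) auto
  ultimately have "trip (t2d t1 t2 (\<gamma> x)) (t3d t4 t3 x) t4 = 0"
    using DERIV_unique assms(2) by (fastforce simp: trip_def cross_skew[of t4])
  then show False
    using assms(4,5) unfolding gamma_sol_def by fastforce
qed

lemma inj_on_t2d_inner:
  assumes "t1 \<noteq> 0" "is_interval I"
    and \<gamma>': "\<And>x. x \<in> I \<Longrightarrow> (\<gamma> has_real_derivative \<gamma>' x) (at x)" "\<And>x. x \<in> I \<Longrightarrow> \<gamma>' x \<noteq> 0"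
    and "\<And>x. x \<in> I \<Longrightarrow> trip w t1 (t2d t1 t2 (\<gamma> x)) \<noteq> 0"
  shows "inj_on (\<lambda>\<theta>. t2d t1 t2 (\<gamma> \<theta>) \<bullet> w) I"
proof (rule inj_on_if_deriv_nonzero[OF assms(2)])
  fix x assume "x \<in> I"
  show "((\<lambda>\<theta>. t2d t1 t2 (\<gamma> \<theta>) \<bullet> w) has_real_derivative
      trip w t1 (t2d t1 t2 (\<gamma> x)) / norm t1 * \<gamma>' x) (at x)"
    unfolding t2d_def by (rule DERIV_chain2[OF Rot_inner_has_real_derivative[OF assms(1)] \<gamma>'(1)[OF \<open>x \<in> I\<close>]])
  show "trip w t1 (t2d t1 t2 (\<gamma> x)) / norm t1 * \<gamma>' x \<noteq> 0"
    using assms \<open>x \<in> I\<close> by simp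
qed

lemma inj_on_t3d_inner:
  assumes "t4 \<noteq> 0" "is_interval I" "\<And>x. x \<in> I \<Longrightarrow> trip (t3d t4 t3 x) t4 w \<noteq> 0"
  shows "inj_on (\<lambda>\<theta>. t3d t4 t3 \<theta> \<bullet> w) I"
proof (rule inj_on_if_deriv_nonzero[OF assms(2)])
  fix x assume "x \<in> I"
  show "((\<lambda>\<theta>. t3d t4 t3 \<theta> \<bullet> w) has_real_derivative trip w t4 (t3d t4 t3 x) / norm t4) (at x)"
    unfolding t3d_def by (rule Rot_inner_has_real_derivative[OF assms(1)])
  have "trip w t4 (t3d t4 t3 x) = - trip (t3d t4 t3 x) t4 w"
    unfolding trip_def by (metis cross_triple cross_skew inner_commute inner_minus_left)
  then show "trip w t4 (t3d t4 t3 x) / norm t4 \<noteq> 0"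
    using assms \<open>x \<in> I\<close> by simp
qed

theorem lemmaA2:
  fixes t1 t2 t3 t4 :: "real^3" and I :: "real set" and \<gamma> :: "real \<Rightarrow> real"
  assumes "trip t1 t2 t3 \<noteq> 0" "trip t2 t3 t4 \<noteq> 0" "trip t3 t4 t1 \<noteq> 0" "trip t4 t1 t2 \<noteq> 0"
    and I: "open_int0 I"
    and gam: "gamma_sol t1 t2 t3 t4 I \<gamma>"
    and maximal: "\<And>J g. open_int0 J \<Longrightarrow> gamma_sol t1 t2 t3 t4 J g \<Longrightarrow> J \<subseteq> I"
  shows "(\<forall>\<theta>t :: real \<Rightarrow> real.
            (\<theta>t C1_differentiable_on I \<and> \<theta>t ` I \<subseteq> I \<and> \<theta>t 0 = 0 \<and>
             (\<forall>\<theta>\<in>I. f_u0 t1 t2 t4 \<gamma> (\<theta>t \<theta>) \<theta> = 0))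
            \<longleftrightarrow> (\<forall>\<theta>\<in>I. \<theta>t \<theta> = \<theta>))
       \<and> (\<forall>\<theta>t :: real \<Rightarrow> real.
            (\<theta>t C1_differentiable_on I \<and> \<theta>t ` I \<subseteq> I \<and> \<theta>t 0 = 0 \<and>
             (\<forall>\<theta>\<in>I. f_v0 t1 t3 t4 (\<theta>t \<theta>) \<theta> = 0))
            \<longleftrightarrow> (\<forall>\<theta>\<in>I. \<theta>t \<theta> = \<theta>))"
proof -
  have I: "open I" "is_interval I" "0 \<in> I"
    using assms(5) unfolding open_int0_def by auto
  have "t1 \<noteq> 0" "t4 \<noteq> 0"
    using assms(1,4) by (auto simp: trip_def)
  obtain \<gamma>' where \<gamma>': "\<And>x. x \<in> I \<Longrightarrow> (\<gamma> has_real_derivative \<gamma>' x) (at x)"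
    using gam unfolding gamma_sol_def C1_differentiable_on_def
    by (auto simp: has_real_derivative_iff_has_vector_derivative)
  have signs: "trip t4 t1 (t2d t1 t2 (\<gamma> x)) \<noteq> 0" "trip (t3d t4 t3 x) t4 t1 \<noteq> 0" if "x \<in> I" for x
    using gam that unfolding gamma_sol_def by fastforce+
  have "inj_on (\<lambda>\<theta>. t2d t1 t2 (\<gamma> \<theta>) \<bullet> t4) I"
    using gamma_sol_deriv_nonzero[OF \<open>t1 \<noteq> 0\<close> \<open>t4 \<noteq> 0\<close> I(1) gam _ \<gamma>'] signs(1)
    by (intro inj_on_t2d_inner[OF \<open>t1 \<noteq> 0\<close> I(2) \<gamma>'])
  moreover have "inj_on (\<lambda>\<theta>. t3d t4 t3 \<theta> \<bullet> t1) I"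
    using signs(2) by (intro inj_on_t3d_inner[OF \<open>t4 \<noteq> 0\<close> I(2)])
  ultimately show ?thesis
    unfolding f_u0_def f_v0_def by (intro conjI allI level_eq_solution_iff_id[OF I(1,3)])
qed

end
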